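(* Let $E$ be a Banach $f$-algebra and let $(x_\alpha)_{\alpha\in A}$, $(y_\beta)_{\beta\in B}$ be nets in $E$ with $x_\alpha\xrightarrow{mw}x$ and $y_\beta\xrightarrow{mw}y$. Then the nets $(x_\alpha\vee y_\beta)_{(\alpha,\beta)\in A\times B}$ and $(x_\alpha\wedge y_\beta)_{(\alpha,\beta)\in A\times B}$ $mw$-converge to $x\vee y$ and $x\wedge y$, respectively.
   Context: All vector lattices are real and Archimedean. An $f$-algebra is a vector lattice with an associative multiplication making it an algebra, such that products of positive elements are positive and $x\wedge y=0$ implies $(xz)\wedge y=(zx)\wedge y=0$ for all $z\ge0$. A Banach $f$-algebra is an $f$-algebra which is a Banach lattice with $\|xy\|\le\|x\|\|y\|$. A net $(x_\alpha)$ in $E$ $mw$-converges to $x$ ($x_\alpha\xrightarrow{mw}x$) if $|x_\alpha-x|u\to0$ weakly for every $u\in E_+$. $A\times B$ is directed componentwise. *)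

theory Defs
  imports "HOL-Analysis.Analysis"
begin

class banach_lattice_algebra_base =
  real_normed_algebra + banach + lattice + ordered_real_vector

definition lat_abs :: "'a::{lattice, ab_group_add} \<Rightarrow> 'a" where
  "lat_abs x = sup x (- x)"

definition archimedean_vl :: "'a::banach_lattice_algebra_base itself \<Rightarrow> bool" where
  "archimedean_vl _ \<longleftrightarrow>
     (\<forall>x y :: 'a. 0 \<le> x \<and> (\<forall>n::nat. real n *\<^sub>R x \<le> y) \<longrightarrow> x = 0)"

definition lattice_norm :: "'a::banach_lattice_algebra_base itself \<Rightarrow> bool" where
  "lattice_norm _ \<longleftrightarrow> (\<forall>x y :: 'a. lat_abs x \<le> lat_abs y \<longrightarrow> norm x \<le> norm y)"

definition f_algebra :: "'a::banach_lattice_algebra_base itself \<Rightarrow> bool" where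
  "f_algebra _ \<longleftrightarrow>
     (\<forall>x y :: 'a. 0 \<le> x \<and> 0 \<le> y \<longrightarrow> 0 \<le> x * y) \<and>
     (\<forall>x y z :: 'a. inf x y = 0 \<and> 0 \<le> z \<longrightarrow> inf (x * z) y = 0 \<and> inf (z * x) y = 0)"

definition banach_f_algebra :: "'a::banach_lattice_algebra_base itself \<Rightarrow> bool" where
  "banach_f_algebra T \<longleftrightarrow> archimedean_vl T \<and> lattice_norm T \<and> f_algebra T"

definition directed :: "('i \<Rightarrow> 'i \<Rightarrow> bool) \<Rightarrow> bool" where
  "directed le \<longleftrightarrow> (\<forall>a. le a a) \<and> (\<forall>a b c. le a b \<and> le b c \<longrightarrow> le a c) \<and>
     (\<exists>a::'i. True) \<and> (\<forall>a b. \<exists>c. le a c \<and> le b c)"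

definition net_tendsto :: "('i \<Rightarrow> 'i \<Rightarrow> bool) \<Rightarrow> ('i \<Rightarrow> 'b::topological_space) \<Rightarrow> 'b \<Rightarrow> bool" where
  "net_tendsto le x l \<longleftrightarrow>
     (\<forall>S. open S \<and> l \<in> S \<longrightarrow> (\<exists>a0. \<forall>a. le a0 a \<longrightarrow> x a \<in> S))"

definition weak_tendsto :: "('i \<Rightarrow> 'i \<Rightarrow> bool) \<Rightarrow> ('i \<Rightarrow> 'a::real_normed_vector) \<Rightarrow> 'a \<Rightarrow> bool" where
  "weak_tendsto le x l \<longleftrightarrow>
     (\<forall>f :: 'a \<Rightarrow> real. bounded_linear f \<longrightarrow> net_tendsto le (\<lambda>a. f (x a)) (f l))"

definition mw_tendsto :: "('i \<Rightarrow> 'i \<Rightarrow> bool) \<Rightarrow> ('i \<Rightarrow> 'a::banach_lattice_algebra_base) \<Rightarrow> 'a \<Rightarrow> bool" where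
  "mw_tendsto le x l \<longleftrightarrow>
     (\<forall>u::'a. 0 \<le> u \<longrightarrow> weak_tendsto le (\<lambda>a. lat_abs (x a - l) * u) 0)"

definition prod_dir :: "('i \<Rightarrow> 'i \<Rightarrow> bool) \<Rightarrow> ('j \<Rightarrow> 'j \<Rightarrow> bool) \<Rightarrow> ('i \<times> 'j) \<Rightarrow> ('i \<times> 'j) \<Rightarrow> bool" where
  "prod_dir leA leB p q \<longleftrightarrow> leA (fst p) (fst q) \<and> leB (snd p) (snd q)"

end

theory Submission
  imports Defs "HOL-Library.Lattice_Algebras"
begin

text \<open>
  Birkhoff's inequality \<open>|x \<squnion> y - x0 \<squnion> y0| \<le> |x - x0| + |y - y0|\<close> (and its dual for
  \<open>\<sqinter>\<close>), multiplied by \<open>u \<ge> 0\<close> in the f-algebra, dominates the new net by the sum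
  \<open>|x\<^sub>\<alpha> - x0| u + |y\<^sub>\<beta> - y0| u\<close> of two weakly null nets. A positive net dominated by a
  weakly null one is weakly null: for \<open>0 \<le> w \<le> z\<close> every bounded functional satisfies
  \<open>|f w| \<le> f\<^sup>+ z + (-f)\<^sup>+ z\<close>, where \<open>f\<^sup>+ z = sup f[0, z]\<close> is the Riesz-Kantorovich
  positive part, a bounded linear functional because the norm is a lattice norm.
\<close>

subclass (in banach_lattice_algebra_base) lattice_ab_group_add ..

lemma lat_abs_le_iff: "lat_abs x \<le> m \<longleftrightarrow> x \<le> m \<and> - x \<le> m"
  by (simp add: lat_abs_def)

lemma le_lat_abs: "x \<le> lat_abs x" and minus_le_lat_abs: "- x \<le> lat_abs x"
  by (simp_all add: lat_abs_def)

lemma lat_abs_nonneg: "0 \<le> lat_abs (x::'a::lattice_ab_group_add)"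
proof -
  have "x + - x \<le> lat_abs x + lat_abs x"
    by (intro add_mono le_lat_abs minus_le_lat_abs)
  then show ?thesis by simp
qed

lemma lat_abs_minus: "lat_abs (- x) = lat_abs x"
  by (simp add: lat_abs_def sup_commute)

lemma lat_abs_of_nonneg: "0 \<le> (x::'a::lattice_ab_group_add) \<Longrightarrow> lat_abs x = x"
  by (simp add: lat_abs_def sup_absorb1 order_trans[of "- x" 0 x])

lemma pprt_le_lat_abs: "pprt (x::'a::lattice_ab_group_add) \<le> lat_abs x"
  using lat_abs_nonneg[of x] by (simp add: pprt_def lat_abs_def le_supI1)

lemma pprt_diff_pprt_minus: "pprt x - pprt (- x) = (x::'a::lattice_ab_group_add)"
  by (metis diff_minus_eq_add pprt_neg prts)

lemma lat_abs_sup_diff_le: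
  fixes a b c d :: "'a::lattice_ab_group_add"
  shows "lat_abs (sup a b - sup c d) \<le> lat_abs (a - c) + lat_abs (b - d)"
proof -
  let ?m = "lat_abs (a - c) + lat_abs (b - d)"
  have "a - c \<le> ?m" "c - a \<le> ?m" "b - d \<le> ?m" "d - b \<le> ?m"
    using le_lat_abs[of "a - c"] minus_le_lat_abs[of "a - c"]
      le_lat_abs[of "b - d"] minus_le_lat_abs[of "b - d"]
      lat_abs_nonneg[of "a - c"] lat_abs_nonneg[of "b - d"]
    by (auto intro: add_increasing add_increasing2)
  then have "a \<le> c + ?m" "b \<le> d + ?m" "c \<le> a + ?m" "d \<le> b + ?m"
    by (simp_all add: diff_le_eq add.commute)
  then have "sup a b \<le> sup (c + ?m) (d + ?m)" "sup c d \<le> sup (a + ?m) (b + ?m)"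
    using sup_mono by blast+
  then have "sup a b \<le> sup c d + ?m" "sup c d \<le> sup a b + ?m"
    by (simp_all only: add_sup_distrib_right)
  then have "sup a b - sup c d \<le> ?m" "- (sup a b - sup c d) \<le> ?m"
    by (simp_all only: diff_le_eq minus_diff_eq add.commute)
  then show ?thesis
    unfolding lat_abs_le_iff by blast
qed

lemma lat_abs_inf_diff_le:
  fixes a b c d :: "'a::lattice_ab_group_add"
  shows "lat_abs (inf a b - inf c d) \<le> lat_abs (a - c) + lat_abs (b - d)"
proof -
  have "inf a b - inf c d = - (sup (- a) (- b) - sup (- c) (- d))"
    by (simp only: inf_eq_neg_sup[of a b] inf_eq_neg_sup[of c d] minus_diff_minus)
  then have "lat_abs (inf a b - inf c d) = lat_abs (sup (- a) (- b) - sup (- c) (- d))"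
    by (simp only: lat_abs_minus)
  also have "\<dots> \<le> lat_abs (- a - - c) + lat_abs (- b - - d)"
    by (rule lat_abs_sup_diff_le)
  also have "\<dots> = lat_abs (a - c) + lat_abs (b - d)"
    by (simp only: minus_diff_minus lat_abs_minus)
  finally show ?thesis .
qed

lemma norm_le_norm_of_nonneg_le:
  fixes w z :: "'a::banach_lattice_algebra_base"
  assumes "lattice_norm TYPE('a)" "0 \<le> w" "w \<le> z"
  shows "norm w \<le> norm z"
  using assms lat_abs_of_nonneg[of w] lat_abs_of_nonneg[of z]
  unfolding lattice_norm_def by (metis order.trans)

lemma norm_pprt_le:
  fixes x :: "'a::banach_lattice_algebra_base"
  assumes "lattice_norm TYPE('a)"
  shows "norm (pprt x) \<le> norm x"
proof -
  have "lat_abs (pprt x) \<le> lat_abs x"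
    by (metis lat_abs_of_nonneg pprt_le_lat_abs zero_le_pprt)
  with assms show ?thesis
    unfolding lattice_norm_def by blast
qed

definition functional_pprt_cone :: "('a::banach_lattice_algebra_base \<Rightarrow> real) \<Rightarrow> 'a \<Rightarrow> real" where
  "functional_pprt_cone f z = Sup (f ` {0..z})"

definition functional_pprt :: "('a::banach_lattice_algebra_base \<Rightarrow> real) \<Rightarrow> 'a \<Rightarrow> real" where
  "functional_pprt f x = functional_pprt_cone f (pprt x) - functional_pprt_cone f (pprt (- x))"

context
  fixes f :: "'a::banach_lattice_algebra_base \<Rightarrow> real"
  assumes lattice_norm: "lattice_norm TYPE('a)" and f: "bounded_linear f"
begin

lemma le_onorm_norm_of_nonneg_le:
  assumes "0 \<le> w" "w \<le> z"
  shows "f w \<le> onorm f * norm z"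
proof -
  have "f w \<le> onorm f * norm w"
    using onorm[OF f, of w] by simp
  also have "\<dots> \<le> onorm f * norm z"
    using norm_le_norm_of_nonneg_le[OF lattice_norm assms] onorm_pos_le[OF f]
    by (rule mult_left_mono)
  finally show ?thesis .
qed

lemma functional_pprt_cone_upper: "0 \<le> w \<Longrightarrow> w \<le> z \<Longrightarrow> f w \<le> functional_pprt_cone f z"
  unfolding functional_pprt_cone_def
  by (rule cSup_upper) (auto intro!: bdd_aboveI2 le_onorm_norm_of_nonneg_le)

lemma functional_pprt_cone_least:
  "0 \<le> z \<Longrightarrow> (\<And>w. 0 \<le> w \<Longrightarrow> w \<le> z \<Longrightarrow> f w \<le> m) \<Longrightarrow> functional_pprt_cone f z \<le> m"
  unfolding functional_pprt_cone_def by (rule cSup_least) auto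

lemma functional_pprt_cone_nonneg: "0 \<le> z \<Longrightarrow> 0 \<le> functional_pprt_cone f z"
  using functional_pprt_cone_upper[of 0 z] linear_simps(3)[OF f] by simp

lemma functional_pprt_cone_zero [simp]: "functional_pprt_cone f 0 = 0"
  using functional_pprt_cone_nonneg[of 0]
    functional_pprt_cone_least[of 0 0] linear_simps(3)[OF f] by fastforce

lemma functional_pprt_cone_le_norm: "0 \<le> z \<Longrightarrow> functional_pprt_cone f z \<le> onorm f * norm z"
  by (rule functional_pprt_cone_least) (auto intro: le_onorm_norm_of_nonneg_le)

lemma functional_pprt_cone_add:
  assumes a: "0 \<le> a" and b: "0 \<le> b"
  shows "functional_pprt_cone f (a + b) = functional_pprt_cone f a + functional_pprt_cone f b"
proof (rule antisym)
  show "functional_pprt_cone f (a + b) \<le> functional_pprt_cone f a + functional_pprt_cone f b"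
  proof (rule functional_pprt_cone_least)
    show "0 \<le> a + b" using a b by simp
  next
    fix w assume w: "0 \<le> w" "w \<le> a + b"
    \<comment> \<open>Riesz decomposition of \<open>w\<close> along \<open>a + b\<close>\<close>
    have "w \<le> inf (b + w) (b + a)"
      using w b by (simp add: add.commute add_increasing)
    then have "w \<le> b + inf w a"
      by (simp only: add_inf_distrib_left)
    then have "w - inf w a \<le> b"
      by (metis diff_le_eq)
    moreover have "0 \<le> w - inf w a"
      by (simp only: diff_ge_0_iff_ge inf.cobounded1)
    moreover have "0 \<le> inf w a" "inf w a \<le> a"
      using w a by simp_all
    ultimately have "f (inf w a) + f (w - inf w a) \<le>
        functional_pprt_cone f a + functional_pprt_cone f b"
      by (intro add_mono functional_pprt_cone_upper)
    then show "f w \<le> functional_pprt_cone f a + functional_pprt_cone f b"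
      using linear_simps(2)[OF f, of w "inf w a"] by simp
  qed
next
  have "functional_pprt_cone f b \<le> functional_pprt_cone f (a + b) - functional_pprt_cone f a"
  proof (rule functional_pprt_cone_least[OF b])
    fix v assume v: "0 \<le> v" "v \<le> b"
    have "functional_pprt_cone f a \<le> functional_pprt_cone f (a + b) - f v"
    proof (rule functional_pprt_cone_least[OF a])
      fix w assume "0 \<le> w" "w \<le> a"
      then have "f (w + v) \<le> functional_pprt_cone f (a + b)"
        using v by (intro functional_pprt_cone_upper add_nonneg_nonneg add_mono)
      then show "f w \<le> functional_pprt_cone f (a + b) - f v"
        by (simp add: linear_simps[OF f])
    qed
    then show "f v \<le> functional_pprt_cone f (a + b) - functional_pprt_cone f a"
      by simp
  qed
  then show "functional_pprt_cone f a + functional_pprt_cone f b \<le> functional_pprt_cone f (a + b)"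
    by simp
qed

lemma functional_pprt_cone_scaleR_le:
  assumes c: "0 < c" and z: "0 \<le> z"
  shows "functional_pprt_cone f (c *\<^sub>R z) \<le> c * functional_pprt_cone f z"
proof (rule functional_pprt_cone_least)
  show "0 \<le> c *\<^sub>R z" using c z by (intro scaleR_nonneg_nonneg) auto
next
  fix w assume w: "0 \<le> w" "w \<le> c *\<^sub>R z"
  have "(1 / c) *\<^sub>R w \<le> (1 / c) *\<^sub>R (c *\<^sub>R z)"
    using w c by (intro scaleR_left_mono) simp_all
  then have "f ((1 / c) *\<^sub>R w) \<le> functional_pprt_cone f z"
    using w c by (intro functional_pprt_cone_upper scaleR_nonneg_nonneg) auto
  then show "f w \<le> c * functional_pprt_cone f z"
    using c by (simp add: linear_simps[OF f] field_simps)
qed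

lemma functional_pprt_cone_scaleR:
  assumes c: "0 \<le> c" and z: "0 \<le> z"
  shows "functional_pprt_cone f (c *\<^sub>R z) = c * functional_pprt_cone f z"
proof (cases "c = 0")
  case False
  with c have c: "0 < c" by simp
  have "functional_pprt_cone f z = functional_pprt_cone f ((1 / c) *\<^sub>R (c *\<^sub>R z))"
    using c by simp
  also have "\<dots> \<le> (1 / c) * functional_pprt_cone f (c *\<^sub>R z)"
    using c z by (intro functional_pprt_cone_scaleR_le scaleR_nonneg_nonneg) auto
  finally have "c * functional_pprt_cone f z \<le> functional_pprt_cone f (c *\<^sub>R z)"
    using c by (simp add: field_simps)
  with functional_pprt_cone_scaleR_le[OF c z] show ?thesis by simp
qed simp

lemma functional_pprt_diff:
  assumes a: "0 \<le> a" and b: "0 \<le> b"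
  shows "functional_pprt f (a - b) = functional_pprt_cone f a - functional_pprt_cone f b"
proof -
  let ?p = "pprt (a - b)" and ?n = "pprt (- (a - b))"
  have "?p + b = a + ?n"
    using pprt_diff_pprt_minus[of "a - b"] by (simp add: algebra_simps)
  then have "functional_pprt_cone f ?p + functional_pprt_cone f b =
      functional_pprt_cone f a + functional_pprt_cone f ?n"
    using a b by (simp add: functional_pprt_cone_add[symmetric])
  then show ?thesis unfolding functional_pprt_def by simp
qed

lemma functional_pprt_of_nonneg: "0 \<le> z \<Longrightarrow> functional_pprt f z = functional_pprt_cone f z"
  using functional_pprt_diff[of z 0] by simp

lemma functional_pprt_minus: "functional_pprt f (- x) = - functional_pprt f x"
  by (simp add: functional_pprt_def)

lemma functional_pprt_add: "functional_pprt f (x + y) = functional_pprt f x + functional_pprt f y"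
proof -
  have "x + y = (pprt x + pprt y) - (pprt (- x) + pprt (- y))"
    using pprt_diff_pprt_minus[of x] pprt_diff_pprt_minus[of y] by (simp add: algebra_simps)
  then show ?thesis
    by (simp add: functional_pprt_diff functional_pprt_cone_add)
      (simp add: functional_pprt_def)
qed

lemma functional_pprt_scaleR_nonneg:
  assumes "0 \<le> c"
  shows "functional_pprt f (c *\<^sub>R x) = c * functional_pprt f x"
proof -
  have "c *\<^sub>R x = c *\<^sub>R pprt x - c *\<^sub>R pprt (- x)"
    by (simp add: pprt_diff_pprt_minus flip: scaleR_diff_right)
  then have "functional_pprt f (c *\<^sub>R x) =
      functional_pprt_cone f (c *\<^sub>R pprt x) - functional_pprt_cone f (c *\<^sub>R pprt (- x))"
    using assms by (simp add: functional_pprt_diff scaleR_nonneg_nonneg)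
  with assms show ?thesis
    by (simp add: functional_pprt_cone_scaleR functional_pprt_def algebra_simps)
qed

lemma functional_pprt_scaleR: "functional_pprt f (c *\<^sub>R x) = c * functional_pprt f x"
proof (cases "0 \<le> c")
  case False
  have "functional_pprt f (c *\<^sub>R x) = - functional_pprt f ((- c) *\<^sub>R x)"
    by (metis functional_pprt_minus minus_minus scaleR_minus_left)
  also have "\<dots> = c * functional_pprt f x"
    using functional_pprt_scaleR_nonneg[of "- c" x] False by simp
  finally show ?thesis .
qed (rule functional_pprt_scaleR_nonneg)

lemma bounded_linear_functional_pprt: "bounded_linear (functional_pprt f)"
proof (rule bounded_linear_intro[where K = "2 * onorm f"])
  fix x
  have "\<bar>functional_pprt f x\<bar> \<le>
      functional_pprt_cone f (pprt x) + functional_pprt_cone f (pprt (- x))"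
    unfolding functional_pprt_def
    using functional_pprt_cone_nonneg[of "pprt x"] functional_pprt_cone_nonneg[of "pprt (- x)"]
    by simp
  also have "\<dots> \<le> onorm f * norm x + onorm f * norm x"
    using norm_pprt_le[OF lattice_norm, of x] norm_pprt_le[OF lattice_norm, of "- x"]
      onorm_pos_le[OF f]
    by (intro add_mono order_trans[OF functional_pprt_cone_le_norm] mult_left_mono) simp_all
  finally show "norm (functional_pprt f x) \<le> norm x * (2 * onorm f)"
    by (simp add: algebra_simps)
qed (simp_all add: functional_pprt_add functional_pprt_scaleR)

lemma le_functional_pprt: "0 \<le> w \<Longrightarrow> w \<le> z \<Longrightarrow> f w \<le> functional_pprt f z"
  using functional_pprt_cone_upper functional_pprt_of_nonneg by force

end

lemma abs_le_functional_pprt_add: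
  fixes f :: "'a::banach_lattice_algebra_base \<Rightarrow> real"
  assumes "lattice_norm TYPE('a)" "bounded_linear f" "0 \<le> w" "w \<le> z"
  shows "\<bar>f w\<bar> \<le> functional_pprt f z + functional_pprt (\<lambda>v. - f v) z"
proof -
  have "bounded_linear (\<lambda>v. - f v)"
    using assms(2) by (rule bounded_linear_minus)
  note le = le_functional_pprt[OF assms(1,2)] le_functional_pprt[OF assms(1) this]
  have "0 \<le> z"
    using assms(3,4) by (rule order_trans)
  then have "0 \<le> functional_pprt f z" "0 \<le> functional_pprt (\<lambda>v. - f v) z"
    using le[of 0 z] linear_simps(3)[OF assms(2)] by simp_all
  moreover have "f w \<le> functional_pprt f z" "- f w \<le> functional_pprt (\<lambda>v. - f v) z"
    using le[of w z] assms(3,4) by simp_all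
  ultimately show ?thesis
    by linarith
qed

lemma net_tendsto_zero_iff:
  "net_tendsto le h (0::real) \<longleftrightarrow> (\<forall>e>0. \<exists>a0. \<forall>a. le a0 a \<longrightarrow> \<bar>h a\<bar> < e)"
proof
  assume h: "net_tendsto le h 0"
  show "\<forall>e>0. \<exists>a0. \<forall>a. le a0 a \<longrightarrow> \<bar>h a\<bar> < e"
  proof (intro allI impI)
    fix e :: real assume "e > 0"
    then obtain a0 where "\<forall>a. le a0 a \<longrightarrow> h a \<in> ball 0 e"
      using h unfolding net_tendsto_def by (meson centre_in_ball open_ball)
    then show "\<exists>a0. \<forall>a. le a0 a \<longrightarrow> \<bar>h a\<bar> < e"
      by (auto simp: dist_real_def)
  qed
next
  assume h: "\<forall>e>0. \<exists>a0. \<forall>a. le a0 a \<longrightarrow> \<bar>h a\<bar> < e"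
  show "net_tendsto le h 0"
    unfolding net_tendsto_def
  proof (intro allI impI)
    fix S :: "real set" assume "open S \<and> 0 \<in> S"
    then obtain e where "e > 0" "ball 0 e \<subseteq> S"
      using open_contains_ball by blast
    with h show "\<exists>a0. \<forall>a. le a0 a \<longrightarrow> h a \<in> S"
      by (fastforce simp: dist_real_def)
  qed
qed

lemma weak_tendsto_zero_iff:
  fixes x :: "'i \<Rightarrow> 'a::real_normed_vector"
  shows "weak_tendsto le x 0 \<longleftrightarrow>
    (\<forall>f :: 'a \<Rightarrow> real. bounded_linear f \<longrightarrow> (\<forall>e>0. \<exists>a0. \<forall>a. le a0 a \<longrightarrow> \<bar>f (x a)\<bar> < e))"
  unfolding weak_tendsto_def net_tendsto_zero_iff[symmetric]
  by (metis linear_simps(3))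

lemma weak_tendsto_zero_if_dominated:
  fixes w z :: "'i \<Rightarrow> 'a::banach_lattice_algebra_base"
  assumes "lattice_norm TYPE('a)"
    and dom: "\<And>a. 0 \<le> w a \<and> w a \<le> z a"
    and z: "weak_tendsto le z 0"
  shows "weak_tendsto le w 0"
  unfolding weak_tendsto_zero_iff
proof (intro allI impI)
  fix f :: "'a \<Rightarrow> real" and e :: real
  assume f: "bounded_linear f" and e: "0 < e"
  let ?g = "\<lambda>v. functional_pprt f v + functional_pprt (\<lambda>v. - f v) v"
  have "bounded_linear (\<lambda>v. - f v)"
    using f by (rule bounded_linear_minus)
  then have "bounded_linear ?g"
    using assms(1) f by (intro bounded_linear_add bounded_linear_functional_pprt)
  then obtain a0 where a0: "\<And>a. le a0 a \<Longrightarrow> \<bar>?g (z a)\<bar> < e"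
    using z e unfolding weak_tendsto_zero_iff by meson
  have "\<bar>f (w a)\<bar> < e" if "le a0 a" for a
  proof -
    have "\<bar>f (w a)\<bar> \<le> ?g (z a)"
      using dom[of a] by (intro abs_le_functional_pprt_add[OF assms(1) f]) simp_all
    with a0[OF that] show ?thesis
      by linarith
  qed
  then show "\<exists>a0. \<forall>a. le a0 a \<longrightarrow> \<bar>f (w a)\<bar> < e"
    by blast
qed

lemma weak_tendsto_prod_dir_add:
  fixes u :: "'i \<Rightarrow> 'a::real_normed_vector" and v :: "'j \<Rightarrow> 'a"
  assumes u: "weak_tendsto leA u 0" and v: "weak_tendsto leB v 0"
  shows "weak_tendsto (prod_dir leA leB) (\<lambda>(a, b). u a + v b) 0"
  unfolding weak_tendsto_zero_iff
proof (intro allI impI)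
  fix f :: "'a \<Rightarrow> real" and e :: real
  assume f: "bounded_linear f" and e: "0 < e"
  obtain a0 where a0: "\<forall>a. leA a0 a \<longrightarrow> \<bar>f (u a)\<bar> < e / 2"
    using u f e unfolding weak_tendsto_zero_iff by (meson half_gt_zero)
  obtain b0 where b0: "\<forall>b. leB b0 b \<longrightarrow> \<bar>f (v b)\<bar> < e / 2"
    using v f e unfolding weak_tendsto_zero_iff by (meson half_gt_zero)
  have close: "\<bar>f (u a + v b)\<bar> < e" if "leA a0 a" "leB b0 b" for a b
  proof -
    have "\<bar>f (u a)\<bar> < e / 2" "\<bar>f (v b)\<bar> < e / 2"
      using a0 b0 that by blast+
    moreover have "\<bar>f (u a + v b)\<bar> \<le> \<bar>f (u a)\<bar> + \<bar>f (v b)\<bar>"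
      unfolding linear_simps(1)[OF f] by (rule abs_triangle_ineq)
    ultimately show ?thesis
      by linarith
  qed
  show "\<exists>p0. \<forall>p. prod_dir leA leB p0 p \<longrightarrow> \<bar>f (case p of (a, b) \<Rightarrow> u a + v b)\<bar> < e"
  proof (intro exI allI impI)
    fix p assume "prod_dir leA leB (a0, b0) p"
    then show "\<bar>f (case p of (a, b) \<Rightarrow> u a + v b)\<bar> < e"
      using close by (cases p) (simp add: prod_dir_def)
  qed
qed

lemma f_algebra_mult_nonneg:
  fixes x y :: "'a::banach_lattice_algebra_base"
  shows "f_algebra TYPE('a) \<Longrightarrow> 0 \<le> x \<Longrightarrow> 0 \<le> y \<Longrightarrow> 0 \<le> x * y"
  unfolding f_algebra_def by blast

lemma mw_tendsto_prod_dir_if_lat_abs_le: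
  fixes x :: "'i \<Rightarrow> 'a::banach_lattice_algebra_base" and y :: "'j \<Rightarrow> 'a"
  assumes "lattice_norm TYPE('a)" and "f_algebra TYPE('a)"
    and "mw_tendsto leA x x0" and "mw_tendsto leB y y0"
    and le: "\<And>a b. lat_abs (F a b - F0) \<le> lat_abs (x a - x0) + lat_abs (y b - y0)"
  shows "mw_tendsto (prod_dir leA leB) (\<lambda>(a, b). F a b) F0"
  unfolding mw_tendsto_def
proof (intro allI impI)
  fix u :: 'a assume u: "0 \<le> u"
  let ?z = "\<lambda>(a, b). lat_abs (x a - x0) * u + lat_abs (y b - y0) * u"
  have lim: "weak_tendsto (prod_dir leA leB) ?z 0"
    using assms(3,4) u unfolding mw_tendsto_def by (intro weak_tendsto_prod_dir_add) blast+
  have dom: "0 \<le> lat_abs (F a b - F0) * u \<and> lat_abs (F a b - F0) * u \<le> ?z (a, b)" for a b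
  proof
    show "0 \<le> lat_abs (F a b - F0) * u"
      using assms(2) lat_abs_nonneg u by (rule f_algebra_mult_nonneg)
    have "0 \<le> (lat_abs (x a - x0) + lat_abs (y b - y0) - lat_abs (F a b - F0)) * u"
      using assms(2) le[of a b] u by (intro f_algebra_mult_nonneg) simp_all
    then show "lat_abs (F a b - F0) * u \<le> ?z (a, b)"
      by (simp only: left_diff_distrib distrib_right diff_ge_0_iff_ge case_prod_conv)
  qed
  show "weak_tendsto (prod_dir leA leB)
      (\<lambda>p. lat_abs ((case p of (a, b) \<Rightarrow> F a b) - F0) * u) 0"
    by (rule weak_tendsto_zero_if_dominated[OF assms(1) _ lim]) (use dom in \<open>simp split: prod.split\<close>)
qed

theorem proposition2p6:
  fixes x :: "'i \<Rightarrow> 'a::banach_lattice_algebra_base" and y :: "'j \<Rightarrow> 'a"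
    and x0 y0 :: 'a
    and leA :: "'i \<Rightarrow> 'i \<Rightarrow> bool" and leB :: "'j \<Rightarrow> 'j \<Rightarrow> bool"
  assumes "banach_f_algebra TYPE('a)"
    and "directed leA" and "directed leB"
    and "mw_tendsto leA x x0" and "mw_tendsto leB y y0"
  shows "mw_tendsto (prod_dir leA leB) (\<lambda>(a, b). sup (x a) (y b)) (sup x0 y0)
       \<and> mw_tendsto (prod_dir leA leB) (\<lambda>(a, b). inf (x a) (y b)) (inf x0 y0)"
proof -
  have "lattice_norm TYPE('a)" "f_algebra TYPE('a)"
    using assms(1) unfolding banach_f_algebra_def by simp_all
  note mw_tendsto_prod_dir_if_lat_abs_le[OF this assms(4,5)]
  then show ?thesis
    using lat_abs_sup_diff_le lat_abs_inf_diff_le by (intro conjI) fast+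
qed

end
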